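(* Let $n\ge 2$ and let $p(x)=x^{2n+1}-m_{2n}x^{2n}+m_{2n-1}x^{2n-1}+\cdots+m_1x-1$ with $m_j\in\mathbb Z$, and let $x_0,\dots,x_{2n}\in\mathbb C$ be the roots of $p$. If $x_0\in\mathbb R$ is a simple root and $|x_1|=\cdots=|x_{2n}|$, then $x_0=1$ and $|x_j|=1$ for $j=1,\dots,2n$. *)

theory Defs
  imports "HOL-Analysis.Analysis" "HOL-Computational_Algebra.Polynomial"
begin

end

theory Submission
  imports Defs "Berlekamp_Zassenhaus.Factor_Bound"
begin

(*
  The product of all roots is 1, so |x0| r^(2n) = 1 for the common modulus r of x1, ..., x2n.
  As x_k conj(x_k) = r^2 and Q = P / (X - x0) has real coefficients, Q is reciprocal with
  respect to w |-> r^2 / w:  w^(2n) Q(r^2 / w) = Q(w) / x0.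

  If r = 1, then x0 = 1 or x0 = -1, and x0 = -1 would make -1 a root of Q, i.e. a double root of P.

  If r <> 1, then p is irreducible over Q: in a proper factorisation over Z one factor avoids the
  simple root x0, so all its roots have modulus r, while its leading and constant coefficients are
  +-1; this forces r^deg = 1.  Comparing coefficients
  in the reciprocity of Q expresses r^2 as a rational function mu(x0) of the coefficients of Q, and
  the reciprocity itself as integer polynomial identities in x0.  By irreducibility these identities
  also hold at x1, so the roots of P / (X - x1) are closed under w |-> mu(x1) / w.  Hence mu(x1) / x0
  is a root of P, and each of the two possible moduli of that root contradicts r <> 1.
*)

hide_const (open) up_ring.coeff module.smult Coset.order up_ring.monom

lemma poly_eq_if_eq_off_0:
  fixes A B :: "'a::field_char_0 poly"
  assumes "\<And>y. y \<noteq> 0 \<Longrightarrow> poly A y = poly B y"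
  shows "A = B"
proof (rule ccontr)
  assume "A \<noteq> B"
  then have "finite {y. poly (A - B) y = 0}" by (intro poly_roots_finite) simp
  moreover have "UNIV - {0} \<subseteq> {y. poly (A - B) y = 0}" using assms by auto
  moreover have "infinite (UNIV - {0::'a})" by (simp add: infinite_UNIV_char_0)
  ultimately show False using finite_subset by blast
qed

lemma poly_reciprocal_iff_coeff:
  fixes Q :: "'a::field_char_0 poly"
  assumes "degree Q \<le> m"
  shows "(\<forall>y\<noteq>0. y ^ m * poly Q (a / y) = c * poly Q y)
    \<longleftrightarrow> (\<forall>i\<le>m. coeff Q i * a ^ i = c * coeff Q (m - i))"
proof -
  define A where "A = (\<Sum>i\<le>m. monom (coeff Q i * a ^ i) (m - i))"
  have poly_A: "poly A y = y ^ m * poly Q (a / y)" if "y \<noteq> 0" for y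
  proof -
    have "poly A y = (\<Sum>i\<le>m. y ^ m * (coeff Q i * (a / y) ^ i))"
      unfolding A_def poly_sum poly_monom
    proof (intro sum.cong refl)
      fix i assume "i \<in> {..m}"
      then have "y ^ m = y ^ (m - i) * y ^ i" by (simp flip: power_add)
      then show "coeff Q i * a ^ i * y ^ (m - i) = y ^ m * (coeff Q i * (a / y) ^ i)"
        using that by (simp add: power_divide field_simps)
    qed
    also have "\<dots> = y ^ m * poly Q (a / y)"
      by (subst (2) poly_as_sum_of_monoms'[OF assms, symmetric])
        (simp add: poly_sum poly_monom sum_distrib_left)
    finally show ?thesis .
  qed
  have coeff_A: "coeff A (m - i) = coeff Q i * a ^ i" if "i \<le> m" for i
  proof -
    have "coeff A (m - i) = (\<Sum>j\<le>m. if j = i then coeff Q j * a ^ j else 0)"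
      unfolding A_def coeff_sum coeff_monom using that by (intro sum.cong refl) auto
    with that show ?thesis by simp
  qed
  have "degree A \<le> m"
    unfolding A_def by (intro degree_sum_le) (auto intro: order.trans[OF degree_monom_le])
  then have "A = smult c Q \<longleftrightarrow> (\<forall>j\<le>m. coeff A j = c * coeff Q j)"
    using assms by (auto simp: poly_eq_iff) (metis coeff_eq_0 le_trans mult_zero_right not_le)
  also have "\<dots> \<longleftrightarrow> (\<forall>i\<le>m. coeff Q i * a ^ i = c * coeff Q (m - i))"
    using coeff_A by (metis diff_diff_cancel diff_le_self)
  finally show ?thesis
    using poly_A poly_eq_if_eq_off_0[of A "smult c Q"] by auto
qed

lemma poly_shift_Suc_pCons: "poly_shift (Suc n) (pCons a p) = poly_shift n p"
  by (simp add: poly_eq_iff coeff_poly_shift coeff_pCons split: nat.split)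

lemma coeff_synthetic_div: "coeff (synthetic_div p c) i = poly (poly_shift (Suc i) p) c"
  by (induction p arbitrary: i) (auto simp: coeff_pCons poly_shift_Suc_pCons split: nat.split)

lemma map_poly_poly_shift:
  assumes "f 0 = 0"
  shows "map_poly f (poly_shift n p) = poly_shift n (map_poly f p)"
  using assms by (simp add: poly_eq_iff coeff_map_poly coeff_poly_shift)

lemma degree_poly_shift_le: "degree (poly_shift n p) \<le> degree p - n"
  by (rule degree_le) (simp add: coeff_poly_shift coeff_eq_0)

lemma synthetic_div_linear_mult:
  fixes c :: "'a::comm_ring_1"
  shows "synthetic_div ([:-c, 1:] * q) c = q"
proof -
  have "[:-c, 1:] * q + smult c q = pCons 0 q" by (simp add: poly_eq_iff coeff_pCons split: nat.split)
  from synthetic_div_unique[OF this] show ?thesis by simp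
qed

lemma poly_reciprocal_if_equimodular_roots:
  fixes x :: "'a \<Rightarrow> complex" and Q :: "complex poly"
  assumes Q: "Q = (\<Prod>k\<in>S. [:- x k, 1:])" and real: "\<And>i. coeff Q i \<in> \<real>"
    and modulus: "\<And>k. k \<in> S \<Longrightarrow> norm (x k) = r" and "y \<noteq> 0"
  shows "y ^ card S * poly Q (of_real (r\<^sup>2) / y) = (-1) ^ card S * (\<Prod>k\<in>S. x k) * poly Q y"
proof -
  have "y ^ card S * poly Q (of_real (r\<^sup>2) / y) = (\<Prod>k\<in>S. y * (of_real (r\<^sup>2) / y - x k))"
    by (simp add: Q poly_prod prod.distrib)
  also have "\<dots> = (\<Prod>k\<in>S. x k * (-1) * (y - cnj (x k)))"
  proof (intro prod.cong refl)
    fix k assume "k \<in> S"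
    then have "of_real (r\<^sup>2) = x k * cnj (x k)" using modulus by (metis complex_norm_square of_real_power)
    with \<open>y \<noteq> 0\<close> show "y * (of_real (r\<^sup>2) / y - x k) = x k * (-1) * (y - cnj (x k))"
      by (simp add: algebra_simps)
  qed
  also have "\<dots> = (\<Prod>k\<in>S. x k) * (-1) ^ card S * (\<Prod>k\<in>S. y - cnj (x k))"
    by (simp only: prod.distrib prod_constant)
  also have "(\<Prod>k\<in>S. y - cnj (x k)) = cnj (poly Q (cnj y))"
    by (simp add: Q poly_prod)
  also have "cnj (poly Q (cnj y)) = poly Q y"
    using real by (simp add: poly_cnj_real)
  finally show ?thesis by (simp add: mult_ac)
qed

lemma norm_poly_0_eq_power_degree:
  fixes H :: "complex poly"
  assumes lc: "norm (lead_coeff H) = 1" and roots: "\<And>y. poly H y = 0 \<Longrightarrow> norm y = r"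
  shows "norm (poly H 0) = r ^ degree H"
proof -
  obtain root where H: "smult (lead_coeff H) (\<Prod>i<degree H. [:-root i, 1:]) = H"
    by (rule complex_poly_decompose')
  have norm_root: "norm (root i) = r" if "i < degree H" for i
  proof (rule roots)
    have "poly H (root i) = lead_coeff H * (\<Prod>k<degree H. root i - root k)"
      by (subst H[symmetric]) (simp add: poly_prod)
    also have "(\<Prod>k<degree H. root i - root k) = 0"
      using that by (auto simp: prod_zero_iff)
    finally show "poly H (root i) = 0" by simp
  qed
  have "poly H 0 = lead_coeff H * (\<Prod>k<degree H. - root k)"
    by (subst H[symmetric]) (simp add: poly_prod)
  then have "norm (poly H 0) = (\<Prod>k<degree H. norm (root k))"
    using lc by (simp add: norm_mult prod_norm[symmetric])
  also have "\<dots> = r ^ degree H" using norm_root by simp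
  finally show ?thesis .
qed

interpretation of_rat_poly_hom: map_poly_comm_semiring_hom "of_rat :: rat \<Rightarrow> complex"
  by unfold_locales

lemma of_rat_poly_of_int_poly:
  "map_poly (of_rat :: rat \<Rightarrow> complex) (of_int_poly p) = of_int_poly p"
  by (simp add: map_poly_map_poly o_def of_rat_of_int_eq)

lemma rat_dvd_if_common_root:
  fixes p g :: "int poly" and z :: complex
  assumes "p \<noteq> 0" and no_split: "\<And>f h. p = f * h \<Longrightarrow> degree f = 0 \<or> degree h = 0"
    and "poly (of_int_poly p) z = 0" and "poly (of_int_poly g) z = 0"
  shows "of_int_poly p dvd (of_int_poly g :: rat poly)"
proof -
  define f :: "rat poly" where "f = gcd (of_int_poly p) (of_int_poly g)"
  have "f = fst (bezout_coefficients (of_int_poly p) (of_int_poly g)) * of_int_poly p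
      + snd (bezout_coefficients (of_int_poly p) (of_int_poly g)) * of_int_poly g"
    unfolding f_def by (rule bezout_coefficients_fst_snd[symmetric])
  then have "poly (map_poly of_rat f) z = 0"
    using assms by (simp add: of_rat_poly_hom.hom_add of_rat_poly_hom.hom_mult of_rat_poly_of_int_poly)
  moreover have "f \<noteq> 0" using \<open>p \<noteq> 0\<close> by (simp add: f_def)
  ultimately have "degree f \<noteq> 0"
    by (metis degree_eq_zeroE map_poly_pCons map_poly_0 of_rat_eq_0_iff poly_const_conv pCons_eq_0_iff)
  obtain h where ph: "of_int_poly p = f * h" unfolding f_def by (meson dvd_def gcd_dvd1)
  obtain f' h' where "p = f' * h'" "degree f' = degree f" "degree h' = degree h"
    using rat_to_int_factor[OF ph] by blast
  with no_split \<open>degree f \<noteq> 0\<close> have "degree h = 0" by metis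
  moreover have "h \<noteq> 0" using ph \<open>p \<noteq> 0\<close> by auto
  ultimately obtain c where "h = [:c:]" "c \<noteq> 0" by (metis degree_eq_zeroE pCons_eq_0_iff)
  then have "f = of_int_poly p * [:inverse c:]" using ph by (simp add: smult_smult)
  then have "of_int_poly p dvd f" by (simp add: dvd_smult)
  also have "f dvd of_int_poly g" unfolding f_def by simp
  finally show ?thesis .
qed

lemma poly_eq_0_if_rat_dvd:
  fixes p g :: "int poly"
  assumes "of_int_poly p dvd (of_int_poly g :: rat poly)" and "poly (of_int_poly p) w = (0::complex)"
  shows "poly (of_int_poly g) w = 0"
proof -
  obtain k where "of_int_poly g = (of_int_poly p :: rat poly) * k" using assms(1) by (auto elim: dvdE)
  then have "map_poly (of_rat :: rat \<Rightarrow> complex) (of_int_poly g) = map_poly of_rat (of_int_poly p * k)"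
    by simp
  then have "of_int_poly g = (of_int_poly p :: complex poly) * map_poly of_rat k"
    by (simp only: of_rat_poly_hom.hom_mult of_rat_poly_of_int_poly)
  with assms(2) show ?thesis by simp
qed

lemma mult_power_divide_eq_iff:
  fixes a b c d :: "'a::field"
  assumes "d \<noteq> 0" and "i \<le> m"
  shows "a * (b / d) ^ i = c \<longleftrightarrow> a * b ^ i * d ^ (m - i) = c * d ^ m"
proof -
  have "d ^ m = d ^ i * d ^ (m - i)" using \<open>i \<le> m\<close> by (simp flip: power_add)
  then show ?thesis using assms by (simp add: power_divide field_simps)
qed

lemma eq_1_if_power_relations:
  fixes r s :: real
  assumes "r > 0" and "s ^ N * r\<^sup>2 = 1" and "s * r ^ k = 1" and "k * N \<noteq> 2"
  shows "r = 1"
proof (rule ccontr)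
  assume "r \<noteq> 1"
  have "s ^ N * r ^ (k * N) = 1"
    using assms(3) by (metis power_mult power_mult_distrib power_one mult.commute)
  with assms(2) have "r ^ (k * N) = r\<^sup>2"
    by (metis mult_left_cancel mult_zero_left zero_neq_one)
  with \<open>r \<noteq> 1\<close> assms(1,4) show False by (simp add: power_inject_exp')
qed

locale equimodular_unit_poly =
  fixes n :: nat and p :: "int poly" and x :: "nat \<Rightarrow> complex"
  assumes n2: "n \<ge> 2"
    and deg: "degree p = 2 * n + 1"
    and monic: "lead_coeff p = 1"
    and const: "coeff p 0 = -1"
    and roots: "map_poly of_int p = (\<Prod>j\<le>2 * n. [:- x j, 1:])"
    and real_root: "x 0 \<in> \<real>"
    and simple: "order (x 0) (map_poly of_int p) = 1"
    and eqmod: "\<forall>j\<in>{1..2 * n}. norm (x j) = norm (x 1)"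
begin

abbreviation P :: "complex poly" where "P \<equiv> of_int_poly p"

abbreviation r :: real where "r \<equiv> norm (x 1)"

abbreviation cofactor :: "complex \<Rightarrow> complex poly" where "cofactor z \<equiv> synthetic_div P z"

lemma poly_P_eq_0_iff: "poly P y = 0 \<longleftrightarrow> (\<exists>j\<le>2 * n. y = x j)"
  by (auto simp: roots poly_prod)

lemma norm_x: "j \<in> {1..2 * n} \<Longrightarrow> norm (x j) = r"
  using eqmod by blast

lemma P_eq_linear_mult_cofactor: "poly P z = 0 \<Longrightarrow> P = [:-z, 1:] * cofactor z"
  using synthetic_div_correct'[of z P] by simp

lemma coeff_cofactor: "coeff (cofactor z) i = poly (of_int_poly (poly_shift (Suc i) p)) z"
  by (simp add: coeff_synthetic_div map_poly_poly_shift)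

lemma degree_cofactor: "degree (cofactor z) = 2 * n"
  by (simp add: degree_synthetic_div deg)

lemma coeff_cofactor_top: "coeff (cofactor z) (2 * n) = 1"
proof -
  have "poly_shift (Suc (2 * n)) p = 1"
    using monic deg by (intro poly_eqI) (auto simp: coeff_poly_shift coeff_eq_0 coeff_1)
  then show ?thesis by (simp add: coeff_cofactor)
qed

lemma root_mult_cofactor_0: "poly P z = 0 \<Longrightarrow> z * poly (cofactor z) 0 = 1"
proof -
  assume "poly P z = 0"
  have "-1 = poly P 0" by (simp add: poly_0_coeff_0 const)
  also have "\<dots> = - z * poly (cofactor z) 0"
    by (subst P_eq_linear_mult_cofactor[OF \<open>poly P z = 0\<close>]) simp
  finally show ?thesis by simp
qed

lemma cofactor_x0: "cofactor (x 0) = (\<Prod>k\<in>{1..2 * n}. [:- x k, 1:])"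
proof -
  have "{..2 * n} = insert 0 {1..2 * n}" by auto
  then have "P = [:- x 0, 1:] * (\<Prod>k\<in>{1..2 * n}. [:- x k, 1:])" by (simp add: roots)
  then show ?thesis by (simp only: synthetic_div_linear_mult)
qed

lemma x0_mult_prod: "x 0 * (\<Prod>k\<in>{1..2 * n}. x k) = 1"
proof -
  have "poly P (x 0) = 0" using poly_P_eq_0_iff by blast
  then have "x 0 * poly (cofactor (x 0)) 0 = 1" by (rule root_mult_cofactor_0)
  moreover have "poly (cofactor (x 0)) 0 = (\<Prod>k\<in>{1..2 * n}. x k)"
    by (simp add: cofactor_x0 poly_prod prod_uminus)
  ultimately show ?thesis by simp
qed

lemma norm_x0_mult: "norm (x 0) * r ^ (2 * n) = 1"
proof -
  have "norm (x 0) * (\<Prod>k\<in>{1..2 * n}. norm (x k)) = 1"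
    using arg_cong[OF x0_mult_prod, of norm] by (simp add: norm_mult prod_norm)
  moreover have "(\<Prod>k\<in>{1..2 * n}. norm (x k)) = (\<Prod>k\<in>{1..2 * n}. r)"
    by (rule prod.cong[OF refl norm_x])
  ultimately show ?thesis by simp
qed

lemma r_pos: "r > 0"
proof -
  have "r \<noteq> 0"
  proof
    assume "r = 0"
    with norm_x0_mult n2 show False by (simp add: power_0_left)
  qed
  then show ?thesis by simp
qed

lemma x0_nonzero: "x 0 \<noteq> 0"
proof
  assume "x 0 = 0"
  with x0_mult_prod show False by simp
qed

lemma cofactor_x0_at_x0: "poly (cofactor (x 0)) (x 0) \<noteq> 0"
proof
  assume root: "poly (cofactor (x 0)) (x 0) = 0"
  have "degree (cofactor (x 0)) \<noteq> 0" using degree_cofactor n2 by simp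
  then have Q: "cofactor (x 0) \<noteq> 0" by auto
  have "P = [:- x 0, 1:] * cofactor (x 0)"
    by (rule P_eq_linear_mult_cofactor) (use poly_P_eq_0_iff in blast)
  then have "order (x 0) P = order (x 0) ([:- x 0, 1:] * cofactor (x 0))"
    by (rule arg_cong[where f = "order (x 0)"])
  also have "\<dots> = order (x 0) [:- x 0, 1:] + order (x 0) (cofactor (x 0))"
    using Q by (intro order_mult no_zero_divisors) auto
  also have "order (x 0) [:- x 0, 1:] = 1" using order_power_n_n[of "x 0" 1] by simp
  finally have "order (x 0) (cofactor (x 0)) = 0" using simple by simp
  with Q root show False by (simp add: order_root)
qed

lemma coeff_cofactor_x0_real: "coeff (cofactor (x 0)) i \<in> \<real>"
proof -
  obtain t where t: "x 0 = of_real t" using real_root by (auto elim: Reals_cases)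
  have "poly (of_int_poly q) (of_real t) = (of_real (poly (of_int_poly q) t) :: complex)" for q
    by (simp add: poly_altdef degree_map_poly coeff_map_poly)
  then show ?thesis by (simp add: coeff_cofactor t)
qed

lemma cofactor_x0_reciprocal:
  assumes "y \<noteq> 0"
  shows "y ^ (2 * n) * poly (cofactor (x 0)) (of_real (r\<^sup>2) / y) = inverse (x 0) * poly (cofactor (x 0)) y"
proof -
  have "inverse (x 0) = (\<Prod>k\<in>{1..2 * n}. x k)" using x0_mult_prod by (rule inverse_unique)
  with poly_reciprocal_if_equimodular_roots[OF cofactor_x0 coeff_cofactor_x0_real norm_x assms]
  show ?thesis by simp
qed

lemma x0_eq_1_if_r_eq_1:
  assumes "r = 1"
  shows "x 0 = 1"
proof -
  obtain t where t: "x 0 = of_real t" using real_root by (auto elim: Reals_cases)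
  have "\<bar>t\<bar> = 1" using norm_x0_mult assms t by simp
  then have "t = 1 \<or> t = -1" by linarith
  moreover have "t \<noteq> -1"
  proof
    assume "t = -1"
    then have x0: "x 0 = -1" using t by simp
    define Q where "Q = cofactor (x 0)"
    have "(-1) ^ (2 * n) * poly Q (of_real (r\<^sup>2) / -1) = inverse (x 0) * poly Q (-1)"
      unfolding Q_def by (rule cofactor_x0_reciprocal) simp
    then have "poly Q (-1) = - poly Q (-1)" using assms x0 by simp
    then have "poly Q (x 0) = 0" using x0 by simp
    with cofactor_x0_at_x0 show False unfolding Q_def by contradiction
  qed
  ultimately have "t = 1" by blast
  with t show ?thesis by simp
qed

lemma factor_vanishes_at_x0:
  assumes "r \<noteq> 1" and "g dvd p" and "degree g \<noteq> 0"
    and "\<bar>lead_coeff g\<bar> = 1" and "\<bar>coeff g 0\<bar> = 1"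
  shows "poly (of_int_poly g) (x 0) = 0"
proof (rule ccontr)
  assume avoids_x0: "poly (of_int_poly g) (x 0) \<noteq> 0"
  obtain k where p: "p = g * k" using \<open>g dvd p\<close> by (auto elim: dvdE)
  have roots_g: "norm y = r" if root: "poly (of_int_poly g) y = (0::complex)" for y
  proof -
    have "poly P y = 0" using root by (simp add: p of_int_poly_hom.hom_mult)
    then obtain j where "j \<le> 2 * n" "y = x j" by (auto simp: poly_P_eq_0_iff)
    moreover have "j \<noteq> 0"
    proof
      assume "j = 0"
      with avoids_x0 root \<open>y = x j\<close> show False by simp
    qed
    ultimately show ?thesis using norm_x[of j] by simp
  qed
  have "norm (lead_coeff (of_int_poly g :: complex poly)) = 1" using assms(4) by simp
  then have "norm (poly (of_int_poly g :: complex poly) 0) = r ^ degree (of_int_poly g :: complex poly)"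
    using roots_g by (rule norm_poly_0_eq_power_degree)
  then have "r ^ degree g = 1" using assms(5) by (simp add: poly_0_coeff_0)
  then have "r = 1" using power_eq_1_iff[of r "degree g"] r_pos assms(3) by simp
  with assms(1) show False by contradiction
qed

lemma no_proper_factor:
  assumes "r \<noteq> 1" and p: "p = f * h"
  shows "degree f = 0 \<or> degree h = 0"
proof (rule ccontr)
  assume "\<not> ?thesis"
  then have nonconst: "degree f \<noteq> 0" "degree h \<noteq> 0" by auto
  have "lead_coeff f * lead_coeff h = 1" using monic by (simp add: p lead_coeff_mult)
  then have lc: "\<bar>lead_coeff f\<bar> = 1" "\<bar>lead_coeff h\<bar> = 1"
    using abs_zmult_eq_1[of "lead_coeff f" "lead_coeff h"] abs_zmult_eq_1[of "lead_coeff h" "lead_coeff f"]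
    by (simp_all add: mult.commute)
  have "coeff f 0 * coeff h 0 = -1" using const by (simp add: p coeff_mult_0)
  then have "\<bar>coeff f 0 * coeff h 0\<bar> = 1" by simp
  then have cc: "\<bar>coeff f 0\<bar> = 1" "\<bar>coeff h 0\<bar> = 1"
    using abs_zmult_eq_1[of "coeff f 0" "coeff h 0"] abs_zmult_eq_1[of "coeff h 0" "coeff f 0"]
    by (simp_all add: mult.commute)
  have "poly (of_int_poly f) (x 0) = (0::complex)" "poly (of_int_poly h) (x 0) = (0::complex)"
    using factor_vanishes_at_x0[OF assms(1)] nonconst lc cc p by auto
  moreover have "of_int_poly f \<noteq> (0::complex poly)" "of_int_poly h \<noteq> (0::complex poly)"
    using nonconst by auto
  ultimately have "order (x 0) (of_int_poly f :: complex poly) \<noteq> 0" "order (x 0) (of_int_poly h :: complex poly) \<noteq> 0"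
    by (simp_all add: order_root)
  moreover have "order (x 0) P = order (x 0) (of_int_poly f) + order (x 0) (of_int_poly h :: complex poly)"
    using \<open>of_int_poly f \<noteq> 0\<close> \<open>of_int_poly h \<noteq> 0\<close>
    by (simp add: p of_int_poly_hom.hom_mult order_mult)
  ultimately show False using simple by linarith
qed

lemma rat_dvd_if_shared_root:
  assumes "r \<noteq> 1" and "poly P z = 0" and "poly (of_int_poly g) z = 0"
  shows "of_int_poly p dvd (of_int_poly g :: rat poly)"
proof -
  have "p \<noteq> 0" using monic by auto
  then show ?thesis using no_proper_factor[OF assms(1)] assms(2,3) by (rule rat_dvd_if_common_root)
qed

lemma shared_root_transfer:
  assumes "r \<noteq> 1" and "poly P z = 0" and "poly (of_int_poly g) z = 0" and "poly P w = 0"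
  shows "poly (of_int_poly g) w = 0"
  using poly_eq_0_if_rat_dvd[OF rat_dvd_if_shared_root[OF assms(1-3)] assms(4)] .

lemma degree_ge_if_shared_root:
  assumes "r \<noteq> 1" and "poly P z = 0" and "poly (of_int_poly g) z = 0" and "g \<noteq> 0"
  shows "2 * n + 1 \<le> degree g"
proof -
  have "degree (of_int_poly p :: rat poly) \<le> degree (of_int_poly g :: rat poly)"
    using rat_dvd_if_shared_root[OF assms(1-3)] \<open>g \<noteq> 0\<close> by (intro dvd_imp_degree_le) auto
  then show ?thesis by (simp add: deg)
qed

lemma coeff_cofactor_middle_nonzero:
  assumes "r \<noteq> 1" and "poly P z = 0"
  shows "coeff (cofactor z) (Suc n) \<noteq> 0"
proof
  define q where "q = poly_shift (Suc (Suc n)) p"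
  assume "coeff (cofactor z) (Suc n) = 0"
  then have "poly (of_int_poly q) z = 0" by (simp add: q_def coeff_cofactor)
  moreover have "n - 1 + Suc (Suc n) = degree p" using n2 deg by simp
  then have "coeff q (n - 1) = 1" using monic by (simp add: q_def coeff_poly_shift)
  then have "q \<noteq> 0" by auto
  moreover have "degree q < 2 * n + 1"
    using degree_poly_shift_le[of "Suc (Suc n)" p] by (simp add: q_def deg)
  ultimately show False using degree_ge_if_shared_root[OF assms] by fastforce
qed

(*
  At z = x0 the reciprocity of the cofactor takes this form with mu = r^2 and e the sign of 1/x0.
  Writing mu through coefficients of the cofactor makes the condition meaningful at every root z.
*)
definition mu :: "int \<Rightarrow> complex \<Rightarrow> complex" where
  "mu e z = of_int e * coeff (cofactor z) (n - 1) / coeff (cofactor z) (Suc n)"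

definition reciprocal_at :: "int \<Rightarrow> complex \<Rightarrow> bool" where
  "reciprocal_at e z \<longleftrightarrow>
    (\<forall>i\<le>2 * n. coeff (cofactor z) i * mu e z ^ i = coeff (cofactor z) 0 * coeff (cofactor z) (2 * n - i))"

lemma reciprocal_at_iff_poly:
  "reciprocal_at e z \<longleftrightarrow>
    (\<forall>y\<noteq>0. y ^ (2 * n) * poly (cofactor z) (mu e z / y) = coeff (cofactor z) 0 * poly (cofactor z) y)"
  unfolding reciprocal_at_def by (rule poly_reciprocal_iff_coeff[symmetric]) (simp add: degree_cofactor)

lemma reciprocal_at_x0:
  assumes "r \<noteq> 1"
  obtains e where "reciprocal_at e (x 0)"
proof -
  define Q where "Q = cofactor (x 0)"
  define lam :: complex where "lam = of_real (r\<^sup>2)"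
  have "x 0 * coeff Q 0 = 1"
    using root_mult_cofactor_0[of "x 0"] poly_P_eq_0_iff by (auto simp: Q_def poly_0_coeff_0)
  then have coeff_Q_0: "coeff Q 0 = inverse (x 0)" by (simp add: inverse_unique)
  have "\<forall>y\<noteq>0. y ^ (2 * n) * poly Q (lam / y) = inverse (x 0) * poly Q y"
    using cofactor_x0_reciprocal by (simp add: Q_def lam_def)
  moreover have "degree Q = 2 * n" by (simp add: Q_def degree_cofactor)
  ultimately have rec: "coeff Q i * lam ^ i = coeff Q 0 * coeff Q (2 * n - i)" if "i \<le> 2 * n" for i
    using poly_reciprocal_iff_coeff[of Q "2 * n" lam "inverse (x 0)"] that by (simp add: coeff_Q_0)
  obtain e :: int where e: "coeff Q 0 = of_int e * lam ^ n"
  proof -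
    obtain s where s: "inverse (x 0) = of_real s" using Reals_inverse[OF real_root] by (rule Reals_cases)
    have "\<bar>s\<bar> = r ^ (2 * n)"
      using norm_x0_mult s by (metis norm_inverse norm_of_real inverse_unique mult.commute)
    define e :: int where "e = (if s \<ge> 0 then 1 else -1)"
    have "s = of_int e * (r\<^sup>2) ^ n"
      using \<open>\<bar>s\<bar> = r ^ (2 * n)\<close> by (auto simp: e_def power_mult abs_if split: if_splits)
    then have "coeff Q 0 = of_int e * lam ^ n" by (simp add: coeff_Q_0 s lam_def)
    then show ?thesis by (rule that)
  qed
  have "coeff Q (Suc n) * lam ^ Suc n = of_int e * lam ^ n * coeff Q (n - 1)"
    using rec[of "Suc n"] e n2 by (simp add: Suc_diff_le numeral_2_eq_2)
  moreover have "lam \<noteq> 0" using r_pos by (simp add: lam_def)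
  ultimately have "coeff Q (Suc n) * lam = of_int e * coeff Q (n - 1)" by (simp add: mult_ac)
  moreover have "coeff Q (Suc n) \<noteq> 0"
    using coeff_cofactor_middle_nonzero[OF assms] poly_P_eq_0_iff Q_def by blast
  ultimately have "lam = mu e (x 0)" unfolding mu_def Q_def[symmetric] by (simp add: field_simps)
  with rec have "reciprocal_at e (x 0)" by (simp add: reciprocal_at_def Q_def)
  then show ?thesis by (rule that)
qed

(* reciprocal_at with denominators cleared: integer polynomials in z, which transfer between roots. *)
definition reciprocity_poly :: "int \<Rightarrow> nat \<Rightarrow> int poly" where
  "reciprocity_poly e i =
    poly_shift (Suc i) p * (smult e (poly_shift (Suc (n - 1)) p)) ^ i * poly_shift (Suc (Suc n)) p ^ (2 * n - i)
    - poly_shift 1 p * poly_shift (Suc (2 * n - i)) p * poly_shift (Suc (Suc n)) p ^ (2 * n)"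

lemma reciprocal_at_iff_reciprocity_poly:
  assumes "coeff (cofactor z) (Suc n) \<noteq> 0"
  shows "reciprocal_at e z \<longleftrightarrow> (\<forall>i\<le>2 * n. poly (of_int_poly (reciprocity_poly e i)) z = 0)"
proof -
  have "coeff (cofactor z) i * mu e z ^ i = coeff (cofactor z) 0 * coeff (cofactor z) (2 * n - i)
      \<longleftrightarrow> poly (of_int_poly (reciprocity_poly e i)) z = 0" if "i \<le> 2 * n" for i
    unfolding mu_def mult_power_divide_eq_iff[OF assms that]
    by (simp add: reciprocity_poly_def coeff_cofactor hom_distribs)
  then show ?thesis unfolding reciprocal_at_def by blast
qed

lemma reciprocal_at_transfer:
  assumes "r \<noteq> 1" and "reciprocal_at e (x 0)" and "poly P z = 0"
  shows "reciprocal_at e z"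
proof -
  have x0: "poly P (x 0) = 0" using poly_P_eq_0_iff by blast
  have "\<forall>i\<le>2 * n. poly (of_int_poly (reciprocity_poly e i)) (x 0) = 0"
    using assms(2) reciprocal_at_iff_reciprocity_poly[OF coeff_cofactor_middle_nonzero[OF assms(1) x0]]
    by blast
  then have "\<forall>i\<le>2 * n. poly (of_int_poly (reciprocity_poly e i)) z = 0"
    using shared_root_transfer[OF assms(1) x0 _ assms(3)] by blast
  then show ?thesis
    using reciprocal_at_iff_reciprocity_poly[OF coeff_cofactor_middle_nonzero[OF assms(1,3)]] by blast
qed

lemma mu_div_root:
  assumes "reciprocal_at e z" and "poly P z = 0" and "poly P w = 0" and "w \<noteq> z" and "w \<noteq> 0"
  shows "poly P (mu e z / w) = 0"
proof -
  have P: "P = [:-z, 1:] * cofactor z" using assms(2) by (rule P_eq_linear_mult_cofactor)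
  have "poly (cofactor z) w = 0" using assms(3,4) by (subst (asm) P) simp
  then have "w ^ (2 * n) * poly (cofactor z) (mu e z / w) = 0"
    using assms(1,5) by (simp add: reciprocal_at_iff_poly)
  with assms(5) have "poly (cofactor z) (mu e z / w) = 0" by simp
  then show ?thesis by (subst P) simp
qed

lemma norm_mu:
  assumes "reciprocal_at e z" and "poly P z = 0"
  shows "norm (mu e z) ^ (2 * n) * (norm z)\<^sup>2 = 1"
proof -
  define c where "c = coeff (cofactor z) 0"
  have "coeff (cofactor z) (2 * n) * mu e z ^ (2 * n) = c * coeff (cofactor z) (2 * n - 2 * n)"
    using assms(1) unfolding reciprocal_at_def c_def by blast
  then have "mu e z ^ (2 * n) = c\<^sup>2" by (simp add: coeff_cofactor_top c_def power2_eq_square)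
  then have "norm (mu e z) ^ (2 * n) = (norm c)\<^sup>2" by (metis norm_power)
  moreover have "z * c = 1" using root_mult_cofactor_0[OF assms(2)] by (simp add: c_def poly_0_coeff_0)
  then have "norm z * norm c = 1" by (metis norm_mult norm_one)
  ultimately show ?thesis by (metis power_mult_distrib power_one mult.commute)
qed

lemma r_eq_1_if_mu_div_x0_root:
  assumes "norm \<mu> ^ (2 * n) * r\<^sup>2 = 1" and "j \<le> 2 * n" and "\<mu> / x 0 = x j"
  shows "r = 1"
proof (cases "j = 0")
  case True
  then have "norm \<mu> = (norm (x 0))\<^sup>2"
    using assms(3) x0_nonzero by (simp add: field_simps norm_mult power2_eq_square)
  then have "norm \<mu> * r ^ (4 * n) = (norm (x 0) * r ^ (2 * n))\<^sup>2"
    by (simp add: power_mult_distrib flip: power_mult)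
  also have "\<dots> = 1" using norm_x0_mult by simp
  finally have "norm \<mu> * r ^ (4 * n) = 1" .
  moreover have "4 * n * (2 * n) \<noteq> 2" using n2 by simp
  ultimately show ?thesis using eq_1_if_power_relations[OF r_pos assms(1)] by blast
next
  case False
  then have "norm (x j) = r" using assms(2) norm_x[of j] by simp
  then have "norm \<mu> = r * norm (x 0)" using assms(3) x0_nonzero by (simp add: field_simps norm_mult)
  moreover have "2 * n = Suc (2 * n - 1)" using n2 by simp
  then have "r ^ (2 * n) = r ^ (2 * n - 1) * r" by (metis power_Suc2)
  ultimately have "norm \<mu> * r ^ (2 * n - 1) = norm (x 0) * r ^ (2 * n)" by (simp add: mult_ac)
  then have "norm \<mu> * r ^ (2 * n - 1) = 1" using norm_x0_mult by simp
  moreover have "(2 * n - 1) * (2 * n) \<noteq> 2"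
  proof -
    have "3 * 4 \<le> (2 * n - 1) * (2 * n)" using n2 by (intro mult_le_mono) auto
    then show ?thesis by linarith
  qed
  ultimately show ?thesis using eq_1_if_power_relations[OF r_pos assms(1)] by blast
qed

lemma r_eq_1: "r = 1"
proof (rule ccontr)
  assume r: "r \<noteq> 1"
  obtain e where "reciprocal_at e (x 0)" using reciprocal_at_x0[OF r] .
  have x0: "poly P (x 0) = 0" using poly_P_eq_0_iff by blast
  have x1: "poly P (x 1) = 0" unfolding poly_P_eq_0_iff using n2 by (intro exI[of _ 1]) auto
  have rec: "reciprocal_at e (x 1)" by (rule reciprocal_at_transfer) fact+
  have "x 0 \<noteq> x 1"
  proof
    assume "x 0 = x 1"
    then have "r ^ Suc (2 * n) = 1" using norm_x0_mult by simp
    with r r_pos show False using power_eq_1_iff[of r "Suc (2 * n)"] by simp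
  qed
  then have "poly P (mu e (x 1) / x 0) = 0"
    using mu_div_root[OF rec x1 x0] x0_nonzero by simp
  then obtain j where "j \<le> 2 * n" "mu e (x 1) / x 0 = x j" using poly_P_eq_0_iff by blast
  then have "r = 1" using r_eq_1_if_mu_div_x0_root norm_mu[OF rec x1] by blast
  with r show False by contradiction
qed

end

theorem lemma3p5:
  fixes n :: nat and p :: "int poly" and x :: "nat \<Rightarrow> complex"
  assumes n2: "n \<ge> 2"
    and deg: "degree p = 2 * n + 1"
    and monic: "lead_coeff p = 1"
    and const: "coeff p 0 = -1"
    and roots: "map_poly of_int p = (\<Prod>j\<le>2 * n. [:- x j, 1:])"
    and real_root: "x 0 \<in> \<real>"
    and simple: "order (x 0) (map_poly of_int p) = 1"
    and eqmod: "\<forall>j\<in>{1..2 * n}. norm (x j) = norm (x 1)"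
  shows "x 0 = 1 \<and> (\<forall>j\<in>{1..2 * n}. norm (x j) = 1)"
proof -
  interpret equimodular_unit_poly n p x
    by unfold_locales (fact assms)+
  have r: "norm (x 1) = 1" by (rule r_eq_1)
  have "norm (x j) = 1" if "j \<in> {1..2 * n}" for j
    using norm_x[OF that] r by simp
  with x0_eq_1_if_r_eq_1[OF r] show ?thesis by blast
qed

end
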